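(* Let $p,q\ge 0$ be integers and $\alpha=(\alpha_1,\dots,\alpha_p)$, $\beta=(\beta_1,\dots,\beta_q)$ with all $\alpha_i>0$, $\beta_j>0$. On the Hilbert space $\ell^2$ with orthonormal basis $\{|n\rangle\}_{n\ge 0}$, let $\hat a_f|n\rangle=\sqrt{n}\,f(n)|n-1\rangle$ (and $\hat a_f|0\rangle=0$), where $f(n)=\left(\frac{(\beta_1+n-1)\cdots(\beta_q+n-1)}{(\alpha_1+n-1)\cdots(\alpha_p+n-1)}\right)^{1/2}$. Let ${}_p\rho_q(n)=n!\,\frac{(\beta_1)_n\cdots(\beta_q)_n}{(\alpha_1)_n\cdots(\alpha_p)_n}$, ${}_pF_q(\alpha,\beta;x)=\sum_{n\ge0}\frac{x^n}{{}_p\rho_q(n)}$, and for a nonzero complex $w$ with $|w|^2$ strictly inside the disc of convergence of this series define the hypergeometric coherent state $|w;\alpha,\beta\rangle={}_pF_q(\alpha,\beta;|w|^2)^{-1/2}\sum_{n\ge0}\frac{w^n}{\sqrt{{}_p\rho_q(n)}}|n\rangle$. Let $k\ge1$ be an integer, $z\neq0$ such that $|z|^2$ lies strictly inside the disc of convergence, and for $j=0,\dots,k-1$ put ${}_p^kF_q^j(\alpha,\beta;|z|^2)=\sum_{n\ge0}\frac{|z|^{2(nk+j)}}{{}_p\rho_q(nk+j)}$. Then for each $j=0,1,\dots,k-1$, $$\frac{1}{k}\left(\frac{{}_pF_q(\alpha,\beta;|z|^2)}{{}_p^kF_q^j(\alpha,\beta;|z|^2)}\right)^{1/2}\sum_{l=0}^{k-1}e^{-2\pi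 i jl/k}\,|z e^{2\pi i l/k};\alpha,\beta\rangle={}_p^kF_q^j(\alpha,\beta;|z|^2)^{-1/2}\sum_{n\ge0}\frac{z^{nk+j}}{\sqrt{{}_p\rho_q(nk+j)}}|nk+j\rangle=:|z;\alpha,\beta;k,j\rangle,$$ and the vectors $|z;\alpha,\beta;k,j\rangle$, $j=0,\dots,k-1$, form an orthonormal basis of the eigenspace $\{\psi:\hat a_f^k\psi=z^k\psi\}$ of $\hat a_f^k$ with eigenvalue $z^k$, which is spanned by the coherent states $|ze^{2\pi i l/k};\alpha,\beta\rangle$, $l=0,\dots,k-1$.
   Context: $(a)_n=a(a+1)\cdots(a+n-1)$, $(a)_0=1$, is the Pochhammer symbol. The series ${}_pF_q$ converges for all $x$ if $p\le q$ and for $|x|<1$ if $p=q+1$. *)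

theory Defs
  imports "HOL-Analysis.Analysis"
begin

text \<open>Parameters alpha = (alpha_1,...,alpha_p) and beta = (beta_1,...,beta_q) are real lists;
  p = length alpha, q = length beta. Vectors of l^2 are coefficient sequences nat => complex
  w.r.t. the orthonormal basis |n>.\<close>

definition rho :: "real list \<Rightarrow> real list \<Rightarrow> nat \<Rightarrow> real" where
  "rho \<alpha> \<beta> n = fact n * prod_list (map (\<lambda>b. pochhammer b n) \<beta>)
                          / prod_list (map (\<lambda>a. pochhammer a n) \<alpha>)"

definition hypF :: "real list \<Rightarrow> real list \<Rightarrow> real \<Rightarrow> real" where
  "hypF \<alpha> \<beta> x = (\<Sum>n. x ^ n / rho \<alpha> \<beta> n)"

definition hypFkj :: "real list \<Rightarrow> real list \<Rightarrow> nat \<Rightarrow> nat \<Rightarrow> real \<Rightarrow> real" where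
  "hypFkj \<alpha> \<beta> k j x = (\<Sum>n. x ^ (n * k + j) / rho \<alpha> \<beta> (n * k + j))"

definition ffun :: "real list \<Rightarrow> real list \<Rightarrow> nat \<Rightarrow> real" where
  "ffun \<alpha> \<beta> n = sqrt (prod_list (map (\<lambda>b. b + real n - 1) \<beta>)
                        / prod_list (map (\<lambda>a. a + real n - 1) \<alpha>))"

text \<open>a_f |n> = sqrt n f(n) |n-1>, a_f |0> = 0; on coefficient sequences:
  (a_f psi)(m) = sqrt(m+1) f(m+1) psi(m+1).\<close>
definition af :: "real list \<Rightarrow> real list \<Rightarrow> (nat \<Rightarrow> complex) \<Rightarrow> (nat \<Rightarrow> complex)" where
  "af \<alpha> \<beta> \<psi> = (\<lambda>m. complex_of_real (sqrt (real (Suc m)) * ffun \<alpha> \<beta> (Suc m)) * \<psi> (Suc m))"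

definition l2 :: "(nat \<Rightarrow> complex) set" where
  "l2 = {\<psi>. summable (\<lambda>n. (cmod (\<psi> n))\<^sup>2)}"

definition l2_inner :: "(nat \<Rightarrow> complex) \<Rightarrow> (nat \<Rightarrow> complex) \<Rightarrow> complex" where
  "l2_inner \<phi> \<psi> = (\<Sum>n. cnj (\<phi> n) * \<psi> n)"

text \<open>Eigenspace of a_f^k for eigenvalue mu: vectors in the domain of a_f^k
  (psi, a_f psi, ..., a_f^k psi all in l^2) with a_f^k psi = mu psi.\<close>
definition eigenspace :: "real list \<Rightarrow> real list \<Rightarrow> nat \<Rightarrow> complex \<Rightarrow> (nat \<Rightarrow> complex) set" where
  "eigenspace \<alpha> \<beta> k \<mu> = {\<psi>. (\<forall>i\<le>k. (af \<alpha> \<beta> ^^ i) \<psi> \<in> l2) \<and> (af \<alpha> \<beta> ^^ k) \<psi> = (\<lambda>n. \<mu> * \<psi> n)}"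

definition cspan :: "(nat \<Rightarrow> nat \<Rightarrow> complex) \<Rightarrow> nat \<Rightarrow> (nat \<Rightarrow> complex) set" where
  "cspan v k = {\<psi>. \<exists>c :: nat \<Rightarrow> complex. \<psi> = (\<lambda>n. \<Sum>j<k. c j * v j n)}"

definition cstate :: "real list \<Rightarrow> real list \<Rightarrow> complex \<Rightarrow> nat \<Rightarrow> complex" where
  "cstate \<alpha> \<beta> w n = complex_of_real (1 / sqrt (hypF \<alpha> \<beta> ((cmod w)\<^sup>2)))
                       * w ^ n / complex_of_real (sqrt (rho \<alpha> \<beta> n))"

definition kstate :: "real list \<Rightarrow> real list \<Rightarrow> nat \<Rightarrow> nat \<Rightarrow> complex \<Rightarrow> nat \<Rightarrow> complex" where
  "kstate \<alpha> \<beta> k j z m =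
     (if (\<exists>n. m = n * k + j)
      then complex_of_real (1 / sqrt (hypFkj \<alpha> \<beta> k j ((cmod z)\<^sup>2)))
           * z ^ m / complex_of_real (sqrt (rho \<alpha> \<beta> m))
      else 0)"

end

theory Submission
  imports Defs
begin

(* Since sqrt n f(n) = sqrt (rho n / rho (n - 1)), the operator a_f^k sends a coefficient sequence
   psi to m |-> sqrt (rho (m + k) / rho m) psi (m + k). Hence its eigenvectors for z^k are exactly the
   vectors sum_n d (n mod k) z^n / sqrt (rho n) |n> with an arbitrary amplitude d on the residues
   mod k (periodic_state d), a k-dimensional space. |z;k,j> is the normalised such vector with d
   supported on the residue j, so these states are orthonormal and span it. The rotated coherent
   state |z e^(2 pi i l/k)> has amplitude r |-> e^(2 pi i l r/k), and the discrete Fourier transform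
   over the k-th roots of unity turns one family into the other. *)

lemma roots_of_unity_orthogonality:
  fixes j m :: nat
  assumes "k > 0"
  shows "(\<Sum>l<k. exp (2 * of_real pi * \<i> * of_nat l / of_nat k) ^ m
              * exp (- 2 * of_real pi * \<i> * of_nat j * of_nat l / of_nat k))
         = (if m mod k = j mod k then of_nat k else 0)"
proof -
  define \<omega> where "\<omega> = exp (2 * of_real pi * \<i> / of_nat k)"
  have root_pow: "exp (2 * of_real pi * \<i> * of_nat n / of_nat k) = \<omega> ^ n" for n
    unfolding \<omega>_def exp_of_nat_mult[symmetric] by (simp add: field_simps)
  have "\<omega> \<noteq> 0" by (simp add: \<omega>_def)
  define u where "u = \<omega> ^ m / \<omega> ^ j"
  have summand: "exp (2 * of_real pi * \<i> * of_nat l / of_nat k) ^ m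
      * exp (- 2 * of_real pi * \<i> * of_nat j * of_nat l / of_nat k) = u ^ l" for l
  proof -
    have "exp (- 2 * of_real pi * \<i> * of_nat j * of_nat l / of_nat k)
        = inverse (exp (2 * of_real pi * \<i> * of_nat (j * l) / of_nat k))"
      by (simp add: mult.assoc flip: exp_minus)
    then show ?thesis
      unfolding root_pow u_def by (simp add: field_simps flip: power_mult)
  qed
  have "\<omega> ^ k = 1"
    using complex_root_unity[of k 1] assms by (simp add: \<omega>_def)
  moreover have "u ^ k = (\<omega> ^ k) ^ m / (\<omega> ^ k) ^ j"
    unfolding u_def power_divide power_mult[symmetric] by (simp add: mult.commute)
  ultimately have "u ^ k = 1" by simp
  moreover have "u = 1 \<longleftrightarrow> m mod k = j mod k"
    using complex_root_unity_eq[of k m j] assms \<open>\<omega> \<noteq> 0\<close> by (simp add: u_def root_pow)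
  ultimately show ?thesis
    unfolding summand sum_gp_strict by simp
qed

lemma sums_residue_class_iff:
  fixes f :: "nat \<Rightarrow> 'a::{t2_space, comm_monoid_add}"
  assumes "j < k"
  shows "(\<lambda>n. f (n * k + j)) sums s \<longleftrightarrow> (\<lambda>m. if m mod k = j then f m else 0) sums s"
proof -
  have "strict_mono (\<lambda>n. n * k + j)"
    using assms by (auto simp: strict_mono_def)
  moreover have "(if m mod k = j then f m else 0) = 0" if "m \<notin> range (\<lambda>n. n * k + j)" for m
  proof -
    have "m = (m div k) * k + m mod k" by simp
    then show ?thesis using that by (metis rangeI)
  qed
  ultimately show ?thesis
    using sums_mono_reindex[of "\<lambda>n. n * k + j" "\<lambda>m. if m mod k = j then f m else 0"] assms by simp
qed

lemma cspanI: "\<psi> = (\<lambda>m. \<Sum>j<n. c j * v j m) \<Longrightarrow> \<psi> \<in> cspan v n"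
  unfolding cspan_def by blast

lemma cspan_subset_cspan:
  assumes "\<forall>j<n. v j \<in> cspan w n'"
  shows "cspan v n \<subseteq> cspan w n'"
proof
  fix \<psi> assume "\<psi> \<in> cspan v n"
  then obtain c where \<psi>: "\<psi> = (\<lambda>m. \<Sum>j<n. c j * v j m)"
    unfolding cspan_def by blast
  from assms have "\<forall>j. \<exists>c. j < n \<longrightarrow> v j = (\<lambda>m. \<Sum>l<n'. c l * w l m)"
    unfolding cspan_def by blast
  then obtain a where a: "\<And>j. j < n \<Longrightarrow> v j = (\<lambda>m. \<Sum>l<n'. a j l * w l m)"
    by (metis (no_types) choice)
  have "(\<Sum>j<n. c j * v j m) = (\<Sum>l<n'. (\<Sum>j<n. c j * a j l) * w l m)" for m
  proof -
    have "(\<Sum>j<n. c j * v j m) = (\<Sum>j<n. \<Sum>l<n'. c j * a j l * w l m)"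
      by (simp add: a sum_distrib_left mult.assoc)
    also have "\<dots> = (\<Sum>l<n'. (\<Sum>j<n. c j * a j l) * w l m)"
      by (subst sum.swap) (simp add: sum_distrib_right)
    finally show ?thesis .
  qed
  then have "\<psi> = (\<lambda>m. \<Sum>l<n'. (\<Sum>j<n. c j * a j l) * w l m)"
    unfolding \<psi> by simp
  then show "\<psi> \<in> cspan w n'"
    by (rule cspanI)
qed

lemma l2_scale:
  assumes "\<psi> \<in> l2"
  shows "(\<lambda>m. c * \<psi> m) \<in> l2"
  using assms summable_mult[of "\<lambda>n. (cmod (\<psi> n))\<^sup>2" "(cmod c)\<^sup>2"]
  by (simp add: l2_def norm_mult power_mult_distrib)

lemma prod_list_map_mult:
  "prod_list (map (\<lambda>x. f x * g x) xs) = prod_list (map f xs) * (prod_list (map g xs) :: 'a::comm_monoid_mult)"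
  by (induct xs) (simp_all add: ac_simps)

lemma prod_list_pos:
  "(\<And>x. x \<in> set xs \<Longrightarrow> 0 < f x) \<Longrightarrow> (0 :: 'a::linordered_semidom) < prod_list (map f xs)"
  by (induct xs) auto

lemma rho_Suc:
  "rho \<alpha> \<beta> (Suc n) = rho \<alpha> \<beta> n * real (Suc n) * (prod_list (map (\<lambda>b. b + real n) \<beta>)
        / prod_list (map (\<lambda>a. a + real n) \<alpha>))"
  unfolding rho_def pochhammer_Suc prod_list_map_mult by (simp add: field_simps)

lemma cstate_rotate:
  assumes "cmod u = 1"
  shows "cstate \<alpha> \<beta> (w * u) m = u ^ m * cstate \<alpha> \<beta> w m"
proof -
  have "cmod (w * u) = cmod w"
    using assms by (simp add: norm_mult)
  then show ?thesis
    unfolding cstate_def by (simp add: power_mult_distrib)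
qed

locale hypergeometric_params =
  fixes \<alpha> \<beta> :: "real list"
  assumes \<alpha>_pos: "\<forall>a\<in>set \<alpha>. a > 0" and \<beta>_pos: "\<forall>b\<in>set \<beta>. b > 0"
begin

lemma rho_pos: "rho \<alpha> \<beta> n > 0"
  unfolding rho_def using \<alpha>_pos \<beta>_pos
  by (intro divide_pos_pos mult_pos_pos prod_list_pos) (auto intro: pochhammer_pos)

lemma sqrt_Suc_mult_ffun:
  "sqrt (real (Suc m)) * ffun \<alpha> \<beta> (Suc m) = sqrt (rho \<alpha> \<beta> (Suc m)) / sqrt (rho \<alpha> \<beta> m)"
proof -
  define Q where "Q = prod_list (map (\<lambda>b. b + real m) \<beta>) / prod_list (map (\<lambda>a. a + real m) \<alpha>)"
  have "ffun \<alpha> \<beta> (Suc m) = sqrt Q"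
    unfolding ffun_def Q_def by (simp add: add.assoc)
  moreover have "rho \<alpha> \<beta> (Suc m) = rho \<alpha> \<beta> m * (real (Suc m) * Q)"
    unfolding rho_Suc Q_def by simp
  ultimately show ?thesis
    using rho_pos[of m] by (simp add: real_sqrt_mult)
qed

lemma af_iterate:
  "(af \<alpha> \<beta> ^^ i) \<psi> m = complex_of_real (sqrt (rho \<alpha> \<beta> (m + i)) / sqrt (rho \<alpha> \<beta> m)) * \<psi> (m + i)"
proof (induct i arbitrary: m)
  case 0
  then show ?case using rho_pos[of m] by simp
next
  case (Suc i)
  have "(af \<alpha> \<beta> ^^ Suc i) \<psi> m = af \<alpha> \<beta> ((af \<alpha> \<beta> ^^ i) \<psi>) m" by simp
  also have "\<dots> = complex_of_real (sqrt (rho \<alpha> \<beta> (Suc m)) / sqrt (rho \<alpha> \<beta> m)) *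
     (complex_of_real (sqrt (rho \<alpha> \<beta> (Suc m + i)) / sqrt (rho \<alpha> \<beta> (Suc m))) * \<psi> (Suc m + i))"
    unfolding af_def Suc sqrt_Suc_mult_ffun ..
  also have "\<dots> = complex_of_real (sqrt (rho \<alpha> \<beta> (m + Suc i)) / sqrt (rho \<alpha> \<beta> m)) * \<psi> (m + Suc i)"
    using rho_pos[of "Suc m"] by (simp add: field_simps)
  finally show ?case .
qed

end

locale hypergeometric_eigenspace = hypergeometric_params +
  fixes k :: nat and z :: complex
  assumes k_pos: "k > 0" and z_nonzero: "z \<noteq> 0"
    and in_disc: "ereal ((cmod z)\<^sup>2) < conv_radius (\<lambda>n. 1 / rho \<alpha> \<beta> n)"
begin

abbreviation "x \<equiv> (cmod z)\<^sup>2"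
abbreviation "F \<equiv> hypF \<alpha> \<beta> x"
abbreviation "Fk j \<equiv> hypFkj \<alpha> \<beta> k j x"

definition periodic_state :: "(nat \<Rightarrow> complex) \<Rightarrow> nat \<Rightarrow> complex" where
  "periodic_state d m = d (m mod k) * z ^ m / complex_of_real (sqrt (rho \<alpha> \<beta> m))"

lemma summable_hypF_terms: "summable (\<lambda>m. x ^ m / rho \<alpha> \<beta> m)"
proof -
  have "ereal (norm x) < conv_radius (\<lambda>n. 1 / rho \<alpha> \<beta> n)"
    using in_disc by simp
  from summable_in_conv_radius[OF this] show ?thesis by simp
qed

lemma hypF_terms_pos: "x ^ m / rho \<alpha> \<beta> m > 0"
  using z_nonzero rho_pos[of m] by simp

lemma hypF_pos: "F > 0"
  unfolding hypF_def using summable_hypF_terms hypF_terms_pos by (rule suminf_pos)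

lemma hypFkj_sums:
  assumes "j < k"
  shows "(\<lambda>m. if m mod k = j then x ^ m / rho \<alpha> \<beta> m else 0) sums Fk j"
proof -
  let ?g = "\<lambda>m. if m mod k = j then x ^ m / rho \<alpha> \<beta> m else 0"
  have "summable ?g"
    by (rule summable_comparison_test'[OF summable_hypF_terms]) (simp add: rho_pos less_imp_le)
  then have "(\<lambda>n. x ^ (n * k + j) / rho \<alpha> \<beta> (n * k + j)) sums suminf ?g"
    using sums_residue_class_iff[OF assms, of "\<lambda>m. x ^ m / rho \<alpha> \<beta> m"] summable_sums by simp
  then show ?thesis
    unfolding hypFkj_def using \<open>summable ?g\<close> by (simp add: sums_iff)
qed

lemma hypFkj_pos:
  assumes "j < k"
  shows "Fk j > 0"
proof -
  have "summable (\<lambda>n. x ^ (n * k + j) / rho \<alpha> \<beta> (n * k + j))"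
    using hypFkj_sums[OF assms] sums_residue_class_iff[OF assms, of "\<lambda>m. x ^ m / rho \<alpha> \<beta> m"]
    by (simp add: sums_summable)
  then show ?thesis
    unfolding hypFkj_def using hypF_terms_pos by (rule suminf_pos)
qed

lemma kstate_eq:
  assumes "j < k"
  shows "kstate \<alpha> \<beta> k j z m = (if m mod k = j
     then complex_of_real (1 / sqrt (Fk j)) * z ^ m / complex_of_real (sqrt (rho \<alpha> \<beta> m)) else 0)"
proof -
  have "(\<exists>n. m = n * k + j) \<longleftrightarrow> m mod k = j"
    using assms by (metis div_mult_mod_eq mod_mult_self3 mod_less)
  then show ?thesis
    unfolding kstate_def by simp
qed

lemma kstate_eq_periodic_state:
  assumes "j < k"
  shows "kstate \<alpha> \<beta> k j z = periodic_state (\<lambda>r. if r = j then 1 / sqrt (Fk j) else 0)"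
  using assms by (auto simp: kstate_eq periodic_state_def)

lemma kstate_eq_cstate:
  assumes "j < k"
  shows "kstate \<alpha> \<beta> k j z m
    = (if m mod k = j then complex_of_real (sqrt (F / Fk j)) * cstate \<alpha> \<beta> z m else 0)"
proof -
  let ?v = "z ^ m / complex_of_real (sqrt (rho \<alpha> \<beta> m))"
  have "1 / sqrt (Fk j) = sqrt (F / Fk j) * (1 / sqrt F)"
    using hypF_pos by (simp add: real_sqrt_divide)
  then have "complex_of_real (1 / sqrt (Fk j)) * ?v = complex_of_real (sqrt (F / Fk j)) * (complex_of_real (1 / sqrt F) * ?v)"
    by (simp only: of_real_mult mult.assoc)
  then show ?thesis
    unfolding kstate_eq[OF assms] cstate_def by simp
qed

lemma cstate_root_of_unity:
  "cstate \<alpha> \<beta> (z * exp (2 * of_real pi * \<i> * of_nat l / of_nat k))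
     = periodic_state (\<lambda>r. exp (2 * of_real pi * \<i> * of_nat l / of_nat k) ^ r / sqrt F)"
proof
  fix m
  let ?\<omega> = "exp (2 * of_real pi * \<i> * of_nat l / of_nat k)"
  have "?\<omega> ^ k = 1"
    using complex_root_unity k_pos by blast
  moreover have "?\<omega> ^ m = (?\<omega> ^ k) ^ (m div k) * ?\<omega> ^ (m mod k)"
    by (simp flip: power_mult power_add)
  ultimately have "?\<omega> ^ m = ?\<omega> ^ (m mod k)"
    by simp
  moreover have "cstate \<alpha> \<beta> (z * ?\<omega>) m = ?\<omega> ^ m * cstate \<alpha> \<beta> z m"
    by (rule cstate_rotate) simp
  ultimately show "cstate \<alpha> \<beta> (z * ?\<omega>) m = periodic_state (\<lambda>r. ?\<omega> ^ r / sqrt F) m"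
    by (simp add: cstate_def periodic_state_def)
qed

lemma periodic_state_in_l2: "periodic_state d \<in> l2"
proof -
  define D where "D = (\<Sum>r<k. (cmod (d r))\<^sup>2)"
  have "norm ((cmod (periodic_state d m))\<^sup>2) \<le> D * (x ^ m / rho \<alpha> \<beta> m)" for m
  proof -
    have "norm ((cmod (periodic_state d m))\<^sup>2) = (cmod (d (m mod k)))\<^sup>2 * (x ^ m / rho \<alpha> \<beta> m)"
      using rho_pos[of m]
      by (simp add: periodic_state_def norm_mult norm_divide norm_power power_mult_distrib power_divide
          flip: power_mult) (simp add: mult.commute)
    also have "\<dots> \<le> D * (x ^ m / rho \<alpha> \<beta> m)"
      unfolding D_def using k_pos hypF_terms_pos[of m]
      by (intro mult_right_mono member_le_sum) auto
    finally show ?thesis .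
  qed
  moreover have "summable (\<lambda>m. D * (x ^ m / rho \<alpha> \<beta> m))"
    using summable_hypF_terms by (rule summable_mult)
  ultimately show ?thesis
    unfolding l2_def by (blast intro: summable_comparison_test')
qed

lemma af_iterate_periodic_state:
  "(af \<alpha> \<beta> ^^ i) (periodic_state d) = (\<lambda>m. z ^ i * periodic_state (\<lambda>r. d ((r + i) mod k)) m)"
proof
  fix m
  show "(af \<alpha> \<beta> ^^ i) (periodic_state d) m = z ^ i * periodic_state (\<lambda>r. d ((r + i) mod k)) m"
    unfolding af_iterate periodic_state_def using rho_pos[of m] rho_pos[of "m + i"]
    by (simp add: field_simps power_add mod_add_right_eq)
qed

lemma periodic_state_in_eigenspace: "periodic_state d \<in> eigenspace \<alpha> \<beta> k (z ^ k)"
proof -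
  have "(af \<alpha> \<beta> ^^ i) (periodic_state d) \<in> l2" for i
    unfolding af_iterate_periodic_state using periodic_state_in_l2 by (rule l2_scale)
  moreover have "(af \<alpha> \<beta> ^^ k) (periodic_state d) = (\<lambda>m. z ^ k * periodic_state d m)"
    unfolding af_iterate_periodic_state by (simp add: periodic_state_def)
  ultimately show ?thesis
    unfolding eigenspace_def by blast
qed

lemma eigenvector_eq_periodic_state:
  assumes "\<psi> \<in> eigenspace \<alpha> \<beta> k (z ^ k)"
  shows "\<psi> = periodic_state (\<lambda>r. \<psi> r * sqrt (rho \<alpha> \<beta> r) / z ^ r)"
proof
  fix m
  have shift: "complex_of_real (sqrt (rho \<alpha> \<beta> (m + k)) / sqrt (rho \<alpha> \<beta> m)) * \<psi> (m + k) = z ^ k * \<psi> m" for m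
    using assms unfolding eigenspace_def af_iterate by (auto dest: fun_cong[of _ _ m])
  show "\<psi> m = periodic_state (\<lambda>r. \<psi> r * sqrt (rho \<alpha> \<beta> r) / z ^ r) m"
  proof (induct m rule: less_induct)
    case (less m)
    show ?case
    proof (cases "m < k")
      case True
      then show ?thesis using rho_pos[of m] z_nonzero by (simp add: periodic_state_def)
    next
      case False
      then obtain n where m: "m = n + k"
        by (metis add.commute le_add_diff_inverse not_less)
      with less k_pos have "\<psi> n = periodic_state (\<lambda>r. \<psi> r * sqrt (rho \<alpha> \<beta> r) / z ^ r) n"
        by simp
      with shift[of n] show ?thesis
        unfolding m periodic_state_def using rho_pos[of n] rho_pos[of "n + k"] z_nonzero
        by (simp add: field_simps power_add)
    qed
  qed
qed

lemma eigenspace_eq_periodic_states: "eigenspace \<alpha> \<beta> k (z ^ k) = range periodic_state"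
  using eigenvector_eq_periodic_state periodic_state_in_eigenspace by blast

lemma sum_periodic_state:
  "(\<lambda>m. \<Sum>j<n. c j * periodic_state (d j) m) = periodic_state (\<lambda>r. \<Sum>j<n. c j * d j r)"
  by (simp add: periodic_state_def fun_eq_iff sum_distrib_right sum_divide_distrib mult.assoc)

lemma periodic_state_eq_sum_kstate:
  "periodic_state d = (\<lambda>m. \<Sum>j<k. (d j * sqrt (Fk j)) * kstate \<alpha> \<beta> k j z m)"
proof
  fix m
  have "(\<Sum>j<k. (d j * sqrt (Fk j)) * kstate \<alpha> \<beta> k j z m)
      = (\<Sum>j<k. if j = m mod k then periodic_state d m else 0)"
  proof (rule sum.cong)
    fix j assume "j \<in> {..<k}"
    then show "(d j * sqrt (Fk j)) * kstate \<alpha> \<beta> k j z m = (if j = m mod k then periodic_state d m else 0)"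
      using hypFkj_pos[of j] by (auto simp: kstate_eq periodic_state_def)
  qed simp
  also have "\<dots> = periodic_state d m"
    using k_pos by simp
  finally show "periodic_state d m = (\<Sum>j<k. (d j * sqrt (Fk j)) * kstate \<alpha> \<beta> k j z m)" ..
qed

lemma cspan_kstate: "cspan (\<lambda>j. kstate \<alpha> \<beta> k j z) k = range periodic_state"
proof
  show "cspan (\<lambda>j. kstate \<alpha> \<beta> k j z) k \<subseteq> range periodic_state"
  proof
    fix \<psi> assume "\<psi> \<in> cspan (\<lambda>j. kstate \<alpha> \<beta> k j z) k"
    then obtain c where "\<psi> = (\<lambda>m. \<Sum>j<k. c j * kstate \<alpha> \<beta> k j z m)"
      unfolding cspan_def by blast
    also have "\<dots> = (\<lambda>m. \<Sum>j<k. c j * periodic_state (\<lambda>r. if r = j then 1 / sqrt (Fk j) else 0) m)"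
      by (intro ext sum.cong refl) (simp add: kstate_eq_periodic_state)
    finally show "\<psi> \<in> range periodic_state"
      unfolding sum_periodic_state by blast
  qed
  show "range periodic_state \<subseteq> cspan (\<lambda>j. kstate \<alpha> \<beta> k j z) k"
    using cspanI[OF periodic_state_eq_sum_kstate] by blast
qed

lemma kstate_eq_sum_cstate:
  assumes "j < k"
  shows "(1 / of_nat k) * complex_of_real (sqrt (F / Fk j))
           * (\<Sum>l<k. exp (- 2 * of_real pi * \<i> * of_nat j * of_nat l / of_nat k)
                      * cstate \<alpha> \<beta> (z * exp (2 * of_real pi * \<i> * of_nat l / of_nat k)) m)
         = kstate \<alpha> \<beta> k j z m"
proof -
  have "(\<Sum>l<k. exp (- 2 * of_real pi * \<i> * of_nat j * of_nat l / of_nat k)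
                * cstate \<alpha> \<beta> (z * exp (2 * of_real pi * \<i> * of_nat l / of_nat k)) m)
      = (\<Sum>l<k. (exp (2 * of_real pi * \<i> * of_nat l / of_nat k) ^ m
                * exp (- 2 * of_real pi * \<i> * of_nat j * of_nat l / of_nat k)) * cstate \<alpha> \<beta> z m)"
    by (intro sum.cong refl) (simp add: cstate_rotate)
  also have "\<dots> = (\<Sum>l<k. exp (2 * of_real pi * \<i> * of_nat l / of_nat k) ^ m
                * exp (- 2 * of_real pi * \<i> * of_nat j * of_nat l / of_nat k)) * cstate \<alpha> \<beta> z m"
    by (rule sum_distrib_right[symmetric])
  also have "\<dots> = (if m mod k = j then of_nat k else 0) * cstate \<alpha> \<beta> z m"
    using roots_of_unity_orthogonality[OF k_pos] assms by simp
  finally show ?thesis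
    using k_pos by (simp add: kstate_eq_cstate[OF assms])
qed

lemma cspan_cstate:
  "cspan (\<lambda>l. cstate \<alpha> \<beta> (z * exp (2 * of_real pi * \<i> * of_nat l / of_nat k))) k
     = cspan (\<lambda>j. kstate \<alpha> \<beta> k j z) k"
proof
  show "cspan (\<lambda>l. cstate \<alpha> \<beta> (z * exp (2 * of_real pi * \<i> * of_nat l / of_nat k))) k
      \<subseteq> cspan (\<lambda>j. kstate \<alpha> \<beta> k j z) k"
    by (intro cspan_subset_cspan) (simp add: cstate_root_of_unity cspan_kstate)
next
  have "kstate \<alpha> \<beta> k j z \<in> cspan (\<lambda>l. cstate \<alpha> \<beta> (z * exp (2 * of_real pi * \<i> * of_nat l / of_nat k))) k"
    if "j < k" for j
  proof (rule cspanI)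
    show "kstate \<alpha> \<beta> k j z = (\<lambda>m. \<Sum>l<k. ((1 / of_nat k) * complex_of_real (sqrt (F / Fk j))
        * exp (- 2 * of_real pi * \<i> * of_nat j * of_nat l / of_nat k))
        * cstate \<alpha> \<beta> (z * exp (2 * of_real pi * \<i> * of_nat l / of_nat k)) m)"
      by (simp add: fun_eq_iff kstate_eq_sum_cstate[OF that, symmetric] sum_distrib_left mult.assoc)
  qed
  then show "cspan (\<lambda>j. kstate \<alpha> \<beta> k j z) k
      \<subseteq> cspan (\<lambda>l. cstate \<alpha> \<beta> (z * exp (2 * of_real pi * \<i> * of_nat l / of_nat k))) k"
    by (intro cspan_subset_cspan) blast
qed

lemma kstate_orthonormal:
  assumes "i < k" and "j < k"
  shows "l2_inner (kstate \<alpha> \<beta> k i z) (kstate \<alpha> \<beta> k j z) = (if i = j then 1 else 0)"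
proof (cases "i = j")
  case False
  then have "cnj (kstate \<alpha> \<beta> k i z m) * kstate \<alpha> \<beta> k j z m = 0" for m
    using assms by (simp add: kstate_eq)
  then have "(\<lambda>m. cnj (kstate \<alpha> \<beta> k i z m) * kstate \<alpha> \<beta> k j z m) = (\<lambda>m. 0)"
    by (rule ext)
  then show ?thesis
    using False by (simp add: l2_inner_def)
next
  case True
  have "(cmod (kstate \<alpha> \<beta> k j z m))\<^sup>2 = (if m mod k = j then x ^ m / rho \<alpha> \<beta> m else 0) / Fk j" for m
    using rho_pos[of m] hypFkj_pos[OF assms(2)]
    by (simp add: kstate_eq[OF assms(2)] norm_mult norm_divide norm_power power_mult_distrib power_divide
        flip: power_mult) (simp add: mult.commute)
  then have "cnj (kstate \<alpha> \<beta> k j z m) * kstate \<alpha> \<beta> k j z m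
      = complex_of_real ((if m mod k = j then x ^ m / rho \<alpha> \<beta> m else 0) / Fk j)" for m
    by (metis complex_norm_square mult.commute)
  moreover have "(\<lambda>m. complex_of_real ((if m mod k = j then x ^ m / rho \<alpha> \<beta> m else 0) / Fk j)) sums 1"
    using sums_of_real[where 'a = complex, OF sums_divide[OF hypFkj_sums[OF assms(2)], of "Fk j"]] hypFkj_pos[OF assms(2)]
    by simp
  ultimately show ?thesis
    using True unfolding l2_inner_def by (simp add: sums_iff)
qed

end

theorem proposition2:
  fixes \<alpha> \<beta> :: "real list" and k :: nat and z :: complex
  assumes "\<forall>a\<in>set \<alpha>. a > 0" and "\<forall>b\<in>set \<beta>. b > 0" and "k \<ge> 1" and "z \<noteq> 0"
    and "ereal ((cmod z)\<^sup>2) < conv_radius (\<lambda>n. 1 / rho \<alpha> \<beta> n)"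
  shows "(\<forall>j<k. (\<lambda>m. (1 / of_nat k)
              * complex_of_real (sqrt (hypF \<alpha> \<beta> ((cmod z)\<^sup>2) / hypFkj \<alpha> \<beta> k j ((cmod z)\<^sup>2)))
              * (\<Sum>l<k. exp (- 2 * of_real pi * \<i> * of_nat j * of_nat l / of_nat k)
                         * cstate \<alpha> \<beta> (z * exp (2 * of_real pi * \<i> * of_nat l / of_nat k)) m))
            = kstate \<alpha> \<beta> k j z)
       \<and> (\<forall>j<k. kstate \<alpha> \<beta> k j z \<in> eigenspace \<alpha> \<beta> k (z ^ k))
       \<and> (\<forall>i<k. \<forall>j<k. l2_inner (kstate \<alpha> \<beta> k i z) (kstate \<alpha> \<beta> k j z) = (if i = j then 1 else 0))
       \<and> eigenspace \<alpha> \<beta> k (z ^ k) = cspan (\<lambda>j. kstate \<alpha> \<beta> k j z) k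
       \<and> eigenspace \<alpha> \<beta> k (z ^ k) = cspan (\<lambda>l. cstate \<alpha> \<beta> (z * exp (2 * of_real pi * \<i> * of_nat l / of_nat k))) k"
proof -
  interpret hypergeometric_eigenspace \<alpha> \<beta> k z
    by unfold_locales (use assms in auto)
  have "\<forall>j<k. kstate \<alpha> \<beta> k j z \<in> eigenspace \<alpha> \<beta> k (z ^ k)"
    by (simp add: kstate_eq_periodic_state periodic_state_in_eigenspace)
  moreover have "eigenspace \<alpha> \<beta> k (z ^ k) = cspan (\<lambda>j. kstate \<alpha> \<beta> k j z) k"
    by (simp add: eigenspace_eq_periodic_states cspan_kstate)
  ultimately show ?thesis
    using kstate_eq_sum_cstate kstate_orthonormal cspan_cstate by (auto simp: fun_eq_iff)
qed

end
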